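(* For every positive integer $k$, \[ \sum_{i+t\le k}B_{2t}\,2^{2t}\binom{2k+2}{2t,\;2i+1,\;2k-2t-2i+1}=2^{2k+1}(k+1), \] where the sum ranges over all pairs of nonnegative integers $i,t$ with $i+t\le k$.
   Context: The Bernoulli numbers $B_m$ ($m\ge 0$) are defined by $\dfrac{x}{e^x-1}=\sum_{m=0}^\infty B_m\dfrac{x^m}{m!}$. The trinomial coefficient is $\binom{n}{r_1,r_2,r_3}=\dfrac{n!}{r_1!\,r_2!\,r_3!}$ for nonnegative integers $r_1+r_2+r_3=n$. *)

theory Defs
  imports "HOL-Computational_Algebra.Formal_Power_Series"
begin

definition bernoulli :: "nat \<Rightarrow> real" where
  "bernoulli m = fact m * fps_nth (fps_X / (fps_exp 1 - 1)) m"

definition trinomial :: "nat \<Rightarrow> nat \<Rightarrow> nat \<Rightarrow> nat \<Rightarrow> real" where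
  "trinomial n r1 r2 r3 = fact n / (fact r1 * fact r2 * fact r3)"

end

theory Submission imports Defs begin

text \<open>Adding \<open>x/2\<close> to the Bernoulli generating function \<open>x/(e^x - 1)\<close> gives
  \<open>C(x) = (x/2) coth (x/2)\<close>, an even series, so \<open>B\<^sub>n = n! [x^n] C\<close> for \<open>n \<noteq> 1\<close> and the odd
  coefficients of \<open>C\<close> vanish. Comparing coefficients of \<open>x^(2k+2)\<close> in
  \<open>2 C(x) (e^x - 1) = x (e^x + 1)\<close> therefore yields \<open>\<Sum>\<^sub>t binom(2k+2, 2t) B\<^sub>2\<^sub>t = k + 1\<close>.
  The trinomial coefficient factors as \<open>binom(2k+2, 2t) binom(2k+2-2t, 2i+1)\<close>, and the sum over
  \<open>i\<close> of these odd-index binomials is \<open>2^(2k-2t+1)\<close>, so the whole sum collapses to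
  \<open>2^(2k+1) \<Sum>\<^sub>t binom(2k+2, 2t) B\<^sub>2\<^sub>t\<close>.\<close>

unbundle fps_syntax

lemma sum_choose_odd_indices:
  fixes m :: nat
  shows "(\<Sum>i\<le>m. real ((2*m+2) choose (2*i+1))) = 2 ^ (2*m+1)"
proof -
  let ?g = "\<lambda>j. if odd j then real ((2*m+2) choose j) else 0"
  have "(\<Sum>j\<le>2*m+2. ?g j) = (\<Sum>j\<le>Suc (2*m). ?g j)"
    using sum.atMost_Suc[of ?g "Suc (2*m)"] by simp
  also have "\<dots> = (\<Sum>i\<le>m. real ((2*m+2) choose (2*i+1)))"
    unfolding sum.in_pairs_0 by simp
  finally have "2 * (\<Sum>i\<le>m. real ((2*m+2) choose (2*i+1))) = 2 ^ (2*m+2)"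
    using choose_odd_sum[of "2*m+2", where 'a = real] by simp
  then show ?thesis by simp
qed

lemma trinomial_eq_choose_mult_choose:
  assumes "r1 + r2 + r3 = n"
  shows "trinomial n r1 r2 r3 = real (n choose r1) * real ((n - r1) choose r2)"
proof -
  have "n - r1 - r2 = r3" using assms by simp
  then show ?thesis
    using assms by (simp add: trinomial_def binomial_fact field_simps)
qed

lemma fps_exp_one_minus_one_neq_0: "fps_exp (1::'a::field_char_0) - 1 \<noteq> 0"
proof
  assume "fps_exp (1::'a) - 1 = 0"
  then have "(fps_exp (1::'a) - 1) $ 1 = 0" by simp
  then show False by simp
qed

lemma subdegree_fps_exp_one_minus_one: "subdegree (fps_exp (1::'a::field_char_0) - 1) = 1"
  by (rule subdegreeI) auto

definition half_x_coth_fps :: "'a::field_char_0 fps" where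
  "half_x_coth_fps = fps_X / (fps_exp 1 - 1) + fps_const (1/2) * fps_X"

lemma half_x_coth_fps_functional_eq:
  "fps_const 2 * half_x_coth_fps * (fps_exp 1 - 1) = fps_X * (fps_exp (1::'a::field_char_0) + 1)"
proof -
  have quotient: "fps_X / (fps_exp 1 - 1) * (fps_exp (1::'a) - 1) = fps_X"
    by (rule fps_times_divide_eq[OF fps_exp_one_minus_one_neq_0])
      (simp only: subdegree_fps_exp_one_minus_one subdegree_fps_X order_refl)
  have half: "fps_const 2 * fps_const (1/2) = (1 :: 'a fps)"
    by (simp only: fps_const_mult) simp
  have "fps_const 2 * half_x_coth_fps * (fps_exp 1 - 1)
      = fps_const 2 * (fps_X / (fps_exp 1 - 1) * (fps_exp (1::'a) - 1))
        + (fps_const 2 * fps_const (1/2)) * (fps_X * (fps_exp 1 - 1))"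
    unfolding half_x_coth_fps_def by (simp add: algebra_simps)
  also have "\<dots> = fps_X * (fps_exp 1 + 1)"
    unfolding quotient half by (simp add: algebra_simps numeral_fps_const[symmetric])
  finally show ?thesis .
qed

lemma half_x_coth_fps_even: "half_x_coth_fps oo - fps_X = (half_x_coth_fps :: 'a::field_char_0 fps)"
proof -
  define C :: "'a fps" where "C = half_x_coth_fps"
  define E :: "'a fps" where "E = fps_exp 1"
  have reflect_E: "(E oo - fps_X) * E = 1"
    using fps_exp_compose_linear[of 1 "-1::'a"] fps_exp_add_mult[of "-1::'a" 1]
    by (simp add: E_def fps_const_neg[symmetric])
  have "(fps_const 2 * C * (E - 1)) oo - fps_X = (fps_X * (E + 1)) oo - fps_X"
    by (simp add: C_def E_def half_x_coth_fps_functional_eq)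
  then have reflected: "fps_const 2 * (C oo - fps_X) * ((E oo - fps_X) - 1) = - fps_X * ((E oo - fps_X) + 1)"
    by (simp add: fps_compose_mult_distrib fps_compose_add_distrib fps_compose_sub_distrib
        fps_compose_uminus)
  have "fps_const 2 * (C oo - fps_X) * (E - 1)
      = (fps_const 2 * (C oo - fps_X) * ((E oo - fps_X) - 1)) * - E"
    using reflect_E by (simp add: algebra_simps)
  also have "\<dots> = fps_X * ((E oo - fps_X) * E) + fps_X * E"
    unfolding reflected by (simp add: algebra_simps)
  also have "\<dots> = fps_X * (E + 1)"
    unfolding reflect_E by (simp add: algebra_simps)
  also have "\<dots> = fps_const 2 * C * (E - 1)"
    by (simp add: C_def E_def half_x_coth_fps_functional_eq)
  finally have "fps_const 2 * (C oo - fps_X) = fps_const 2 * C"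
    using fps_exp_one_minus_one_neq_0 by (simp add: E_def)
  then show ?thesis
    by (simp add: C_def)
qed

lemma half_x_coth_fps_odd_nth: "odd n \<Longrightarrow> half_x_coth_fps $ n = (0::'a::field_char_0)"
  using arg_cong[OF half_x_coth_fps_even, of "\<lambda>f. f $ n"] by (simp add: fps_compose_uminus')

lemma half_x_coth_fps_even_convolution:
  "(\<Sum>t\<le>k. half_x_coth_fps $ (2*t) / fact (2*k+2-2*t)) = (1::'a::field_char_0) / (2 * fact (2*k+1))"
proof -
  define g :: "nat \<Rightarrow> 'a" where "g j = half_x_coth_fps $ j * (fps_exp 1 - 1) $ (2*k+2-j)" for j
  have "(\<Sum>j\<le>2*k+2. g j) = (half_x_coth_fps * (fps_exp 1 - 1)) $ (2*k+2)"
    by (simp only: fps_mult_nth atLeast0AtMost g_def)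
  then have "2 * (\<Sum>j\<le>2*k+2. g j) = (fps_const 2 * half_x_coth_fps * (fps_exp 1 - 1)) $ (2*k+2)"
    by (simp only: mult.assoc fps_mult_left_const_nth)
  also have "\<dots> = (fps_X * (fps_exp 1 + 1)) $ (2*k+2)"
    by (simp only: half_x_coth_fps_functional_eq)
  also have "\<dots> = 1 / fact (2*k+1)"
    by (simp add: algebra_simps)
  finally have convolution: "2 * (\<Sum>j\<le>2*k+2. g j) = 1 / fact (2*k+1)" .
  have "(\<Sum>j\<le>2*k+2. g j) = (\<Sum>j\<le>Suc (2*k). g j)"
    using sum.atMost_Suc[of g "Suc (2*k)"] by (simp add: g_def)
  also have "\<dots> = (\<Sum>t\<le>k. half_x_coth_fps $ (2*t) / fact (2*k+2-2*t))"
    unfolding sum.in_pairs_0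
    by (intro sum.cong) (auto simp: g_def half_x_coth_fps_odd_nth)
  finally show ?thesis
    using convolution by (simp add: field_simps del: fact_Suc)
qed

lemma bernoulli_eq_fact_mult_half_x_coth_fps_nth:
  "n \<noteq> 1 \<Longrightarrow> bernoulli n = fact n * half_x_coth_fps $ n"
  by (simp add: bernoulli_def half_x_coth_fps_def)

lemma sum_choose_even_bernoulli:
  "(\<Sum>t\<le>k. real ((2*k+2) choose (2*t)) * bernoulli (2*t)) = real k + 1"
proof -
  have "(\<Sum>t\<le>k. real ((2*k+2) choose (2*t)) * bernoulli (2*t))
      = fact (2*k+2) * (\<Sum>t\<le>k. half_x_coth_fps $ (2*t) / fact (2*k+2-2*t))"
    unfolding sum_distrib_left
    by (intro sum.cong refl) (simp add: binomial_fact bernoulli_eq_fact_mult_half_x_coth_fps_nth)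
  also have "\<dots> = fact (2*k+2) / (2 * fact (2*k+1))"
    by (simp only: half_x_coth_fps_even_convolution times_divide_eq_right mult_1_right)
  also have "\<dots> = real k + 1"
  proof -
    have "fact (2*k+2) = (2 * real k + 2) * fact (2*k+1)"
      using fact_Suc[of "2*k+1"] by (simp add: algebra_simps)
    then show ?thesis by simp
  qed
  finally show ?thesis .
qed

lemma sum_trinomial_odd_middle:
  assumes "t \<le> k"
  shows "(\<Sum>i\<le>k-t. trinomial (2*k+2) (2*t) (2*i+1) (2*k-2*t-2*i+1))
       = real ((2*k+2) choose (2*t)) * 2 ^ (2*(k-t)+1)"
proof -
  define m where "m = k - t"
  have "(\<Sum>i\<le>k-t. trinomial (2*k+2) (2*t) (2*i+1) (2*k-2*t-2*i+1))
      = (\<Sum>i\<le>m. real ((2*k+2) choose (2*t)) * real ((2*m+2) choose (2*i+1)))"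
  proof (intro sum.cong refl)
    fix i assume "i \<in> {..m}"
    then have "2*t + (2*i+1) + (2*k-2*t-2*i+1) = 2*k+2" and "2*k+2 - 2*t = 2*m+2"
      using assms by (auto simp: m_def)
    then show "trinomial (2*k+2) (2*t) (2*i+1) (2*k-2*t-2*i+1)
        = real ((2*k+2) choose (2*t)) * real ((2*m+2) choose (2*i+1))"
      by (simp only: trinomial_eq_choose_mult_choose)
  qed (simp add: m_def)
  also have "\<dots> = real ((2*k+2) choose (2*t)) * 2 ^ (2*m+1)"
    by (simp only: sum_distrib_left[symmetric] sum_choose_odd_indices)
  finally show ?thesis by (simp add: m_def)
qed

lemma sum_triangle_eq_sum_sum:
  fixes f :: "nat \<Rightarrow> nat \<Rightarrow> 'a::comm_monoid_add"
  shows "(\<Sum>(i, t) \<in> {(i, t). i + t \<le> k}. f i t) = (\<Sum>t\<le>k. \<Sum>i\<le>k-t. f i t)"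
proof -
  have "{(i, t). i + t \<le> k} = prod.swap ` (SIGMA t:{..k}. {..k-t})"
    by (auto simp: image_iff)
  then have "(\<Sum>(i, t) \<in> {(i, t). i + t \<le> k}. f i t) = (\<Sum>(t, i) \<in> (SIGMA t:{..k}. {..k-t}). f i t)"
    by (simp add: sum.reindex case_prod_unfold)
  also have "\<dots> = (\<Sum>t\<le>k. \<Sum>i\<le>k-t. f i t)"
    by (rule sum.Sigma[symmetric]) auto
  finally show ?thesis .
qed

theorem mainTheorem3:
  fixes k :: nat
  assumes "k \<ge> 1"
  shows "(\<Sum>(i, t) \<in> {(i, t). i + t \<le> k}.
            bernoulli (2 * t) * 2 ^ (2 * t) *
            trinomial (2 * k + 2) (2 * t) (2 * i + 1) (2 * k - 2 * t - 2 * i + 1))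
         = 2 ^ (2 * k + 1) * (real k + 1)"
    (is "?lhs = _")
proof -
  have "?lhs = (\<Sum>t\<le>k. bernoulli (2 * t) * 2 ^ (2 * t) *
            (\<Sum>i\<le>k-t. trinomial (2 * k + 2) (2 * t) (2 * i + 1) (2 * k - 2 * t - 2 * i + 1)))"
    by (simp add: sum_triangle_eq_sum_sum sum_distrib_left)
  also have "\<dots> = (\<Sum>t\<le>k. 2 ^ (2 * k + 1) * (real ((2*k+2) choose (2*t)) * bernoulli (2*t)))"
  proof (intro sum.cong refl)
    fix t assume "t \<in> {..k}"
    then have "t \<le> k" by simp
    then have split_power: "(2::real) ^ (2 * k + 1) = 2 ^ (2 * t) * 2 ^ (2*(k-t)+1)"
      by (simp flip: power_add)
    show "bernoulli (2 * t) * 2 ^ (2 * t) *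
        (\<Sum>i\<le>k-t. trinomial (2 * k + 2) (2 * t) (2 * i + 1) (2 * k - 2 * t - 2 * i + 1))
      = 2 ^ (2 * k + 1) * (real ((2*k+2) choose (2*t)) * bernoulli (2*t))"
      unfolding sum_trinomial_odd_middle[OF \<open>t \<le> k\<close>] split_power by (simp only: mult_ac)
  qed
  also have "\<dots> = 2 ^ (2 * k + 1) * (real k + 1)"
    by (simp only: sum_distrib_left[symmetric] sum_choose_even_bernoulli)
  finally show ?thesis .
qed

end
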